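(* Let $\bm{d}\in\mathbb{R}^n$ with $\|\bm{d}\|_2=1$, and let $\bm{a}\sim\mathcal{N}(\bm{0},\bm{I}_n)$. Then for every $\tau\ge 0$, $$\mathbb{E}\!\left[\langle\bm{a},\bm{d}\rangle^2 \,\middle|\, \langle\bm{a},\bm{d}\rangle^2\ge\tau\right]\ \ge\ \frac{6-\tau\,\mathrm{erf}(\sqrt{\tau})}{6-3\,\mathrm{erf}(\sqrt{\tau})}.$$
   Context: The Gauss error function is $\mathrm{erf}(x):=\frac{1}{\sqrt{\pi}}\int_{-x}^{x}e^{-u^2}\,du$. *)

theory Defs
  imports "HOL-Probability.Probability"
begin

definition erf :: "real \<Rightarrow> real" where
  "erf x = (1 / sqrt pi) * integral {-x..x} (\<lambda>u. exp (- u\<^sup>2))"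

definition std_gaussian :: "'a::euclidean_space measure" where
  "std_gaussian = density lborel (\<lambda>x. \<Prod>b\<in>Basis. ennreal (std_normal_density (x \<bullet> b)))"

definition cond_exp_event :: "'a measure \<Rightarrow> ('a \<Rightarrow> real) \<Rightarrow> 'a set \<Rightarrow> real" where
  "cond_exp_event M X A = (\<integral>x. indicator A x * X x \<partial>M) / measure M A"

end

theory Submission
  imports Defs
begin

(* Under the standard Gaussian measure, Z = <a, d> is a sum of independent normal variables
   with total variance |d|^2 = 1, hence standard normal. With s = sqrt tau, the conditional
   expectation is E[Z^2; |Z| >= s] / P(|Z| >= s), and integrating (z phi(z))' = phi(z) - z^2 phi(z)
   over [-s, s] gives E[Z^2; |Z| >= s] = P(|Z| >= s) + 2 s phi(s).
   For tau >= 3/2 the ratio is at least tau, which already exceeds the claimed bound. For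
   tau < 3/2 we insert polynomial bounds for erf s, phi(s) and the integral of phi over [-s, s]
   (from Taylor bounds of exp and rational bounds on pi); the claim then reduces to the
   nonnegativity of one polynomial on [0, sqrt (3/2)], checked on six subintervals. *)

section \<open>Linear functionals of the standard Gaussian\<close>

abbreviation std_normal :: "real measure" where
  "std_normal \<equiv> density lborel (\<lambda>x. ennreal (std_normal_density x))"

lemma prob_space_std_normal: "prob_space std_normal"
  using prob_space_normal_density[of 1 0] by simp

lemma density_PiM_lborel:
  fixes g :: "real \<Rightarrow> real" and I :: "'i set"
  assumes I: "finite I" and g: "g \<in> borel_measurable borel" "\<And>x. 0 \<le> g x"
    and prob: "prob_space (density lborel g)"
  shows "density (\<Pi>\<^sub>M i\<in>I. lborel) (\<lambda>f. \<Prod>i\<in>I. ennreal (g (f i))) = (\<Pi>\<^sub>M i\<in>I. density lborel g)"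
proof -
  interpret product_sigma_finite "\<lambda>_::'i. density lborel g"
    using prob by (simp add: product_sigma_finite_def prob_space_imp_sigma_finite)
  interpret L: product_sigma_finite "\<lambda>_::'i. lborel"
    by (simp add: product_sigma_finite_def lborel.sigma_finite_measure_axioms)
  show ?thesis
  proof (rule PiM_eqI[OF I])
    show "sets (density (\<Pi>\<^sub>M i\<in>I. lborel) (\<lambda>f. \<Prod>i\<in>I. ennreal (g (f i)))) = sets (\<Pi>\<^sub>M i\<in>I. density lborel g)"
      unfolding sets_density by (rule sets_PiM_cong) simp_all
    fix A assume "\<And>i. i \<in> I \<Longrightarrow> A i \<in> sets (density lborel g)"
    then have A: "\<And>i. i \<in> I \<Longrightarrow> A i \<in> sets borel" by simp
    then have "Pi\<^sub>E I A \<in> sets (\<Pi>\<^sub>M i\<in>I. lborel)"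
      by (intro sets_PiM_I_finite I) auto
    then have "emeasure (density (\<Pi>\<^sub>M i\<in>I. lborel) (\<lambda>f. \<Prod>i\<in>I. ennreal (g (f i)))) (Pi\<^sub>E I A)
       = (\<integral>\<^sup>+ f. (\<Prod>i\<in>I. ennreal (g (f i))) * indicator (Pi\<^sub>E I A) f \<partial>(\<Pi>\<^sub>M i\<in>I. lborel))"
      using g by (subst emeasure_density) auto
    also have "\<dots> = (\<integral>\<^sup>+ f. (\<Prod>i\<in>I. ennreal (g (f i)) * indicator (A i) (f i)) \<partial>(\<Pi>\<^sub>M i\<in>I. lborel))"
    proof (intro nn_integral_cong)
      fix f :: "'i \<Rightarrow> real" assume "f \<in> space (\<Pi>\<^sub>M i\<in>I. lborel)"
      then have "f \<in> extensional I" by (simp add: space_PiM PiE_def)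
      then show "(\<Prod>i\<in>I. ennreal (g (f i))) * indicator (Pi\<^sub>E I A) f
          = (\<Prod>i\<in>I. ennreal (g (f i)) * indicator (A i) (f i))"
        using I by (auto simp add: prod.distrib indicator_def PiE_def Pi_def)
    qed
    also have "\<dots> = (\<Prod>i\<in>I. \<integral>\<^sup>+ x. ennreal (g x) * indicator (A i) x \<partial>lborel)"
      using A g I by (intro L.product_nn_integral_prod) auto
    also have "\<dots> = (\<Prod>i\<in>I. emeasure (density lborel g) (A i))"
      using A by (intro prod.cong refl) (simp add: emeasure_density g)
    finally show "emeasure (density (\<Pi>\<^sub>M i\<in>I. lborel) (\<lambda>f. \<Prod>i\<in>I. ennreal (g (f i)))) (Pi\<^sub>E I A)
       = (\<Prod>i\<in>I. emeasure (density lborel g) (A i))" .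
  qed
qed

lemma indep_vars_PiM_components:
  assumes "I \<noteq> {}" and M: "\<And>i. i \<in> I \<Longrightarrow> prob_space (M i)"
  shows "prob_space.indep_vars (\<Pi>\<^sub>M i\<in>I. M i) M (\<lambda>i f. f i) I"
proof -
  interpret prob_space "\<Pi>\<^sub>M i\<in>I. M i" using M by (rule prob_space_PiM)
  have "distr (\<Pi>\<^sub>M i\<in>I. M i) (\<Pi>\<^sub>M i\<in>I. M i) (\<lambda>f. \<lambda>i\<in>I. f i) = distr (\<Pi>\<^sub>M i\<in>I. M i) (\<Pi>\<^sub>M i\<in>I. M i) (\<lambda>f. f)"
    by (rule distr_cong) (auto simp: space_PiM PiE_def extensional_restrict)
  also have "\<dots> = (\<Pi>\<^sub>M i\<in>I. distr (\<Pi>\<^sub>M i\<in>I. M i) (M i) (\<lambda>f. f i))"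
    using M by (simp add: distr_PiM_component cong: PiM_cong)
  finally show ?thesis
    using assms by (subst indep_vars_iff_distr_eq_PiM') auto
qed

lemma distributed_PiM_std_normal_lincomb:
  fixes I :: "'i set" and c :: "'i \<Rightarrow> real"
  assumes I: "finite I" and c: "(\<Sum>i\<in>I. (c i)\<^sup>2) = 1"
  shows "distributed (\<Pi>\<^sub>M i\<in>I. std_normal) lborel (\<lambda>f. \<Sum>i\<in>I. f i * c i) std_normal_density"
proof -
  let ?P = "\<Pi>\<^sub>M i\<in>I. std_normal"
  interpret prob_space ?P by (intro prob_space_PiM prob_space_std_normal)
  define J where "J = {i\<in>I. c i \<noteq> 0}"
  have J: "finite J" "J \<subseteq> I" using I by (auto simp: J_def)
  have sum_J: "(\<Sum>i\<in>I. g i * c i) = (\<Sum>i\<in>J. g i * c i)" for g :: "'i \<Rightarrow> real"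
    using I by (intro sum.mono_neutral_right) (auto simp: J_def)
  have sq_J: "(\<Sum>i\<in>J. \<bar>c i\<bar>\<^sup>2) = 1"
    using c I by (subst (asm) sum.mono_neutral_right[of I J]) (auto simp: J_def)
  then have "J \<noteq> {}" by auto
  have "indep_vars (\<lambda>_. std_normal) (\<lambda>i f. f i) I"
    using \<open>J \<noteq> {}\<close> J(2) by (intro indep_vars_PiM_components prob_space_std_normal) auto
  then have "indep_vars (\<lambda>_. std_normal) (\<lambda>i f. f i) J"
    using J(2) by (rule indep_vars_subset)
  then have indep: "indep_vars (\<lambda>_. borel) (\<lambda>i f. f i * c i) J"
    by (rule indep_vars_compose2[where Y="\<lambda>i x. x * c i"]) auto
  have pos: "0 < \<bar>c i\<bar>" if "i \<in> J" for i
    using that by (simp add: J_def)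
  have dist: "distributed ?P lborel (\<lambda>f. f i * c i) (normal_density 0 \<bar>c i\<bar>)" if i: "i \<in> J" for i
  proof -
    have "distr ?P lborel (\<lambda>f. f i) = distr ?P std_normal (\<lambda>f. f i)"
      by (rule distr_cong) auto
    also have "\<dots> = std_normal"
      using i J by (intro distr_PiM_component prob_space_std_normal) auto
    finally have "distributed ?P lborel (\<lambda>f. f i) (normal_density 0 1)"
      using i J by (auto simp: distributed_def)
    from normal_density_affine[OF this, of "c i" 0] i show ?thesis
      by (simp add: J_def mult.commute)
  qed
  have "distributed ?P lborel (\<lambda>f. \<Sum>i\<in>J. f i * c i) std_normal_density"
    using sum_indep_normal[OF J(1) \<open>J \<noteq> {}\<close> indep pos dist] by (simp only: sq_J sum.neutral_const real_sqrt_one)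
  then show ?thesis
    by (simp only: sum_J)
qed

lemma std_gaussian_eq_distr_PiM:
  "(std_gaussian :: 'a::euclidean_space measure) =
     distr (\<Pi>\<^sub>M b\<in>Basis. std_normal) borel (\<lambda>f. \<Sum>b\<in>Basis. f b *\<^sub>R b)"
proof -
  have coord: "(\<Sum>b'\<in>Basis. f b' *\<^sub>R b') \<bullet> b = f b" if "b \<in> Basis" for f :: "'a \<Rightarrow> real" and b
    using that by (simp add: inner_sum_left inner_Basis if_distrib cong: if_cong)
  have "(std_gaussian :: 'a measure) =
      density (distr (\<Pi>\<^sub>M b\<in>Basis. lborel) borel (\<lambda>f. \<Sum>b\<in>Basis. f b *\<^sub>R b))
        (\<lambda>x. \<Prod>b\<in>Basis. ennreal (std_normal_density (x \<bullet> b)))"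
    unfolding std_gaussian_def by (subst lborel_eq) (rule refl)
  also have "\<dots> = distr (density (\<Pi>\<^sub>M b\<in>Basis. lborel)
      (\<lambda>f. \<Prod>b\<in>Basis. ennreal (std_normal_density ((\<Sum>b'\<in>Basis. f b' *\<^sub>R b') \<bullet> b))))
      borel (\<lambda>f. \<Sum>b\<in>Basis. f b *\<^sub>R b)"
    by (rule density_distr) auto
  also have "\<dots> = distr (density (\<Pi>\<^sub>M b\<in>Basis. lborel)
      (\<lambda>f. \<Prod>b\<in>Basis. ennreal (std_normal_density (f b)))) borel (\<lambda>f. \<Sum>b\<in>Basis. f b *\<^sub>R b)"
    by (intro distr_cong density_cong) (auto simp: coord cong: prod.cong)
  finally show ?thesis
    by (simp add: density_PiM_lborel prob_space_std_normal)
qed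

lemma distributed_std_gaussian_inner:
  fixes d :: "'a::euclidean_space"
  assumes "norm d = 1"
  shows "distributed std_gaussian lborel (\<lambda>a. a \<bullet> d) std_normal_density"
proof -
  have "d \<bullet> d = 1"
    using assms by (simp add: norm_eq_sqrt_inner)
  then have "(\<Sum>b\<in>Basis. (b \<bullet> d)\<^sup>2) = 1"
    by (simp add: euclidean_inner[of d d] power2_eq_square inner_commute)
  from distributed_PiM_std_normal_lincomb[OF finite_Basis this]
  have "distr (\<Pi>\<^sub>M b\<in>Basis. std_normal) lborel (\<lambda>f. \<Sum>b\<in>Basis. f b * (b \<bullet> d)) = density lborel std_normal_density"
    by (simp add: distributed_def)
  moreover have "distr std_gaussian lborel (\<lambda>a. a \<bullet> d) =
      distr (\<Pi>\<^sub>M b\<in>Basis. std_normal) lborel ((\<lambda>a. a \<bullet> d) \<circ> (\<lambda>f. \<Sum>b\<in>Basis. f b *\<^sub>R b))"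
    unfolding std_gaussian_eq_distr_PiM by (rule distr_distr) auto
  moreover have "((\<lambda>a. a \<bullet> d) \<circ> (\<lambda>f. \<Sum>b\<in>(Basis::'a set). f b *\<^sub>R b)) = (\<lambda>f. \<Sum>b\<in>Basis. f b * (b \<bullet> d))"
    by (auto simp: inner_sum_left)
  ultimately show ?thesis
    by (auto simp: distributed_def std_gaussian_def)
qed

section \<open>Truncated moments of the standard normal distribution\<close>

lemma cond_exp_event_distributed:
  fixes X :: "'a \<Rightarrow> real" and g :: "real \<Rightarrow> real"
  assumes X: "distributed M lborel X f" and f: "\<And>z. 0 \<le> f z"
    and A: "A \<in> sets borel" and g: "g \<in> borel_measurable borel"
  shows "cond_exp_event M (\<lambda>x. g (X x)) (X -` A \<inter> space M)
           = (\<integral>z. f z * (indicator A z * g z) \<partial>lborel) / (\<integral>z. f z * indicator A z \<partial>lborel)"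
proof -
  have "(\<integral>z. f z * (indicator A z * g z) \<partial>lborel) = (\<integral>x. indicator A (X x) * g (X x) \<partial>M)"
    using A g f by (intro distributed_integral[OF X]) auto
  also have "\<dots> = (\<integral>x. indicator (X -` A \<inter> space M) x * g (X x) \<partial>M)"
    by (intro Bochner_Integration.integral_cong) (auto simp: indicator_def)
  finally have num: "(\<integral>z. f z * (indicator A z * g z) \<partial>lborel) = \<dots>" .
  have "(\<integral>z. f z * indicator A z \<partial>lborel) = (\<integral>x. indicator A (X x) \<partial>M)"
    using A f by (intro distributed_integral[OF X]) auto
  also have "\<dots> = (\<integral>x. indicator (X -` A \<inter> space M) x \<partial>M)"
    by (intro Bochner_Integration.integral_cong) (auto simp: indicator_def)
  also have "\<dots> = measure M (X -` A \<inter> space M)"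
    by (simp add: Int_absorb2)
  finally show ?thesis
    by (simp add: cond_exp_event_def num)
qed

definition std_normal_tail_prob :: "real \<Rightarrow> real" where
  "std_normal_tail_prob s = (\<integral>z. std_normal_density z * indicator {z. s\<^sup>2 \<le> z\<^sup>2} z \<partial>lborel)"

definition std_normal_tail_moment2 :: "real \<Rightarrow> real" where
  "std_normal_tail_moment2 s =
     (\<integral>z. std_normal_density z * (indicator {z. s\<^sup>2 \<le> z\<^sup>2} z * z\<^sup>2) \<partial>lborel)"

lemma cond_exp_event_std_gaussian_inner_sq:
  fixes d :: "'a::euclidean_space"
  assumes "norm d = 1"
  shows "cond_exp_event std_gaussian (\<lambda>a. (a \<bullet> d)\<^sup>2) {a. s\<^sup>2 \<le> (a \<bullet> d)\<^sup>2}
           = std_normal_tail_moment2 s / std_normal_tail_prob s"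
proof -
  have "closed {z::real. s\<^sup>2 \<le> z\<^sup>2}"
    by (intro closed_Collect_le continuous_intros)
  then have "{z::real. s\<^sup>2 \<le> z\<^sup>2} \<in> sets borel" by simp
  from cond_exp_event_distributed[OF distributed_std_gaussian_inner[OF assms] _ this, of power2]
  show ?thesis
    by (simp add: std_normal_tail_moment2_def std_normal_tail_prob_def std_gaussian_def)
qed

lemma has_integral_symmetric_interval_FTC:
  fixes F f :: "real \<Rightarrow> real"
  assumes "0 \<le> s" and "\<And>x. (F has_real_derivative f x) (at x)"
  shows "(f has_integral (F s - F (-s))) {-s..s}"
  using assms by (intro fundamental_theorem_of_calculus)
    (auto simp: has_real_derivative_iff_has_vector_derivative[symmetric] intro: has_field_derivative_at_within)

lemma integral_indicator_sq_ge:
  fixes f :: "real \<Rightarrow> real"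
  assumes f: "integrable lborel f" and s: "0 \<le> s"
  shows "(\<integral>z. f z * indicator {z. s\<^sup>2 \<le> z\<^sup>2} z \<partial>lborel) = (\<integral>z. f z \<partial>lborel) - integral {-s..s} f"
proof -
  have "s\<^sup>2 \<le> z\<^sup>2 \<longleftrightarrow> z \<notin> {-s<..<s}" for z
    using s abs_le_square_iff[of s z] by auto
  then have split: "f z * indicator {z. s\<^sup>2 \<le> z\<^sup>2} z = f z - indicator {-s<..<s} z *\<^sub>R f z" for z
    by (auto simp: indicator_def)
  have "set_integrable lborel {-s..s} f"
    unfolding set_integrable_def by (rule integrable_mult_indicator) (auto simp: f)
  have "(\<integral>z. indicator {-s<..<s} z *\<^sub>R f z \<partial>lborel) = (LBINT x=ereal (-s)..ereal s. f x)"
    using s by (subst interval_integral_Ioo) (auto simp: set_lebesgue_integral_def)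
  also have "\<dots> = (LBINT x : {-s..s}. f x)"
    by (rule interval_integral_Icc) (use s in simp)
  also have "\<dots> = integral {-s..s} f"
    by (rule set_borel_integral_eq_integral(2)) fact
  finally have "(\<integral>z. indicator {-s<..<s} z *\<^sub>R f z \<partial>lborel) = integral {-s..s} f" .
  moreover have "integrable lborel (\<lambda>z. indicator {-s<..<s} z *\<^sub>R f z)"
    by (rule integrable_mult_indicator) (auto simp: f)
  ultimately show ?thesis
    unfolding split using f by simp
qed

lemma std_normal_tail_prob_eq:
  "0 \<le> s \<Longrightarrow> std_normal_tail_prob s = 1 - integral {-s..s} std_normal_density"
  unfolding std_normal_tail_prob_def by (subst integral_indicator_sq_ge) auto

lemma has_integral_std_normal_density_one_minus_sq:
  assumes "0 \<le> s"
  shows "((\<lambda>z. std_normal_density z - z\<^sup>2 * std_normal_density z) has_integral 2 * s * std_normal_density s) {-s..s}"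
proof -
  have "((\<lambda>z. z * (c * exp (- z\<^sup>2 / 2))) has_real_derivative
      (c * exp (- x\<^sup>2 / 2) - x\<^sup>2 * (c * exp (- x\<^sup>2 / 2)))) (at x)" for c x :: real
    by (auto intro!: derivative_eq_intros simp: power2_eq_square algebra_simps)
  then have "((\<lambda>z. z * std_normal_density z) has_real_derivative
      (std_normal_density x - x\<^sup>2 * std_normal_density x)) (at x)" for x
    unfolding std_normal_density_def .
  from has_integral_symmetric_interval_FTC[OF assms this] show ?thesis
    by (simp add: std_normal_density_def ac_simps)
qed

lemma std_normal_tail_moment2_eq:
  assumes s: "0 \<le> s"
  shows "std_normal_tail_moment2 s = std_normal_tail_prob s + 2 * s * std_normal_density s"
proof -
  have int2: "integrable lborel (\<lambda>z. std_normal_density z * z\<^sup>2)"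
    using integrable_std_normal_moment[of 2] by simp
  have "(\<integral>z. std_normal_density z * z\<^sup>2 \<partial>lborel) = 1"
    using integral_std_normal_moment_even[of 1] by (simp add: power2_eq_square)
  then have moment: "std_normal_tail_moment2 s = 1 - integral {-s..s} (\<lambda>z. std_normal_density z * z\<^sup>2)"
    unfolding std_normal_tail_moment2_def
    using integral_indicator_sq_ge[OF int2 s] by (simp add: ac_simps)
  have "continuous_on {-s..s} std_normal_density"
    "continuous_on {-s..s} (\<lambda>z. std_normal_density z * z\<^sup>2)"
    unfolding std_normal_density_def[abs_def] by (intro continuous_intros; simp)+
  then have "integral {-s..s} std_normal_density - integral {-s..s} (\<lambda>z. std_normal_density z * z\<^sup>2)
      = integral {-s..s} (\<lambda>z. std_normal_density z - z\<^sup>2 * std_normal_density z)"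
    by (simp add: integral_diff integrable_continuous_real mult.commute)
  also have "\<dots> = 2 * s * std_normal_density s"
    using has_integral_std_normal_density_one_minus_sq[OF s] by (rule integral_unique)
  finally show ?thesis
    using moment std_normal_tail_prob_eq[OF s] by simp
qed

lemma std_normal_tail_prob_pos: "0 < std_normal_tail_prob s"
proof -
  let ?a = "\<bar>s\<bar>"
  have int: "integrable lborel (\<lambda>z. indicator {?a..?a+1} z *\<^sub>R std_normal_density z)"
    by (rule integrable_mult_indicator) auto
  have "integral {?a..?a+1} (\<lambda>_. std_normal_density (?a+1)) \<le> integral {?a..?a+1} std_normal_density"
  proof (rule integral_le)
    show "std_normal_density integrable_on {?a..?a+1}"
      unfolding std_normal_density_def[abs_def] by (intro integrable_continuous_real continuous_intros) auto
    fix z assume "z \<in> {?a..?a+1}"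
    then have "z\<^sup>2 \<le> (?a+1)\<^sup>2" by (intro power_mono) auto
    then show "std_normal_density (?a+1) \<le> std_normal_density z"
      unfolding std_normal_density_def by (intro mult_left_mono) auto
  qed auto
  also have "\<dots> = (\<integral>z. indicator {?a..?a+1} z *\<^sub>R std_normal_density z \<partial>lborel)"
    using set_borel_integral_eq_integral(2)[of "{?a..?a+1}" std_normal_density] int
    by (simp add: set_integrable_def set_lebesgue_integral_def)
  also have "\<dots> \<le> std_normal_tail_prob s"
    unfolding std_normal_tail_prob_def
  proof (rule integral_mono[OF int])
    show "integrable lborel (\<lambda>z. std_normal_density z * indicator {z. s\<^sup>2 \<le> z\<^sup>2} z)"
      by (intro integrable_real_mult_indicator borel_closed closed_Collect_le continuous_intros) auto
    fix z :: real
    have "z \<in> {?a..?a+1} \<Longrightarrow> s\<^sup>2 \<le> z\<^sup>2"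
      using abs_le_square_iff[of s z] by auto
    then show "indicator {?a..?a+1} z *\<^sub>R std_normal_density z \<le> std_normal_density z * indicator {z. s\<^sup>2 \<le> z\<^sup>2} z"
      by (auto simp: indicator_def)
  qed
  finally show ?thesis
    by (rule less_le_trans[rotated]) (simp add: normal_density_pos)
qed

lemma std_normal_tail_moment2_ge: "s\<^sup>2 * std_normal_tail_prob s \<le> std_normal_tail_moment2 s"
proof -
  let ?S = "{z::real. s\<^sup>2 \<le> z\<^sup>2}"
  have S: "?S \<in> sets borel"
    by (intro borel_closed closed_Collect_le continuous_intros)
  have "(\<integral>z. s\<^sup>2 * (std_normal_density z * indicator ?S z) \<partial>lborel) \<le> std_normal_tail_moment2 s"
    unfolding std_normal_tail_moment2_def
  proof (rule integral_mono)
    show "integrable lborel (\<lambda>z. s\<^sup>2 * (std_normal_density z * indicator ?S z))"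
      using S by (intro integrable_mult_right integrable_real_mult_indicator) auto
    have "integrable lborel (\<lambda>z. std_normal_density z * z\<^sup>2 * indicator ?S z)"
      using S integrable_std_normal_moment[of 2] by (intro integrable_real_mult_indicator) auto
    then show "integrable lborel (\<lambda>z. std_normal_density z * (indicator ?S z * z\<^sup>2))"
      by (simp add: ac_simps)
    fix z
    show "s\<^sup>2 * (std_normal_density z * indicator ?S z) \<le> std_normal_density z * (indicator ?S z * z\<^sup>2)"
      using mult_right_mono[of "s\<^sup>2" "z\<^sup>2" "std_normal_density z"] by (auto simp: indicator_def ac_simps)
  qed
  then show ?thesis
    by (simp add: std_normal_tail_prob_def)
qed

section \<open>Numerical bounds\<close>

lemma exp_minus_le_quadratic:
  fixes x :: real
  assumes "0 \<le> x"
  shows "exp (-x) \<le> 1 - x + x\<^sup>2/2"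
proof -
  have "1 \<le> (1 + x + x\<^sup>2/2) * (1 - x + x\<^sup>2/2)"
    using assms by (simp add: algebra_simps power2_eq_square power4_eq_xxxx)
  also have "\<dots> \<le> exp x * (1 - x + x\<^sup>2/2)"
  proof (rule mult_right_mono[OF exp_lower_Taylor_quadratic[OF assms]])
    show "0 \<le> 1 - x + x\<^sup>2/2"
      using sum_power2_ge_zero[of "x - 1" 1] by (simp add: power2_eq_square algebra_simps)
  qed
  finally show ?thesis
    by (simp add: exp_minus field_simps)
qed

lemma one_div_sqrt_pi_le: "1 / sqrt pi \<le> 5642/10000"
proof -
  have "(10000/5642)\<^sup>2 \<le> pi" using pi_approx by (simp add: power2_eq_square)
  then have "10000/5642 \<le> sqrt pi" by (rule real_le_rsqrt)
  then show ?thesis by (simp add: field_simps)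
qed

lemma one_div_sqrt_2pi_ge: "3989/10000 \<le> 1 / sqrt (2 * pi)"
proof -
  have "2 * pi \<le> (10000/3989)\<^sup>2" using pi_approx by (simp add: power2_eq_square)
  then have "sqrt (2 * pi) \<le> 10000/3989" by (intro real_le_lsqrt) auto
  then show ?thesis by (simp add: field_simps)
qed

lemma integrable_on_exp_minus_sq: "(\<lambda>u::real. exp (- u\<^sup>2)) integrable_on {a..b}"
  by (intro integrable_continuous_real continuous_intros)

lemma erf_nonneg: "0 \<le> erf s"
  unfolding erf_def by (intro mult_nonneg_nonneg integral_nonneg integrable_on_exp_minus_sq) auto

lemma erf_le_1: "erf s \<le> 1"
proof -
  let ?g = "normal_density 0 (sqrt (1/2))"
  have "(\<lambda>u. ?g u) = (\<lambda>u. 1 / sqrt pi * exp (- u\<^sup>2))"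
    by (simp add: normal_density_def)
  then have "erf s = integral {-s..s} ?g"
    unfolding erf_def by simp
  also have int: "integrable lborel (\<lambda>u. indicator {-s..s} u * ?g u)"
    using integrable_real_mult_indicator[of "{-s..s}" lborel ?g] by (simp add: mult.commute)
  then have "integral {-s..s} ?g = (\<integral>u. indicator {-s..s} u * ?g u \<partial>lborel)"
    by (simp add: set_borel_integral_eq_integral(2)[symmetric] set_lebesgue_integral_def set_integrable_def)
  also have "\<dots> \<le> (\<integral>u. ?g u \<partial>lborel)"
    using int by (intro integral_mono) (auto simp: indicator_def)
  finally show ?thesis by simp
qed

lemma erf_le_poly:
  fixes s :: real
  assumes "0 \<le> s"
  shows "erf s \<le> 11284/10000 * (s - s^3/3 + s^5/10)"
proof -
  have "((\<lambda>u::real. 1 - u\<^sup>2 + u^4/2) has_integral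
      ((s - s^3/3 + s^5/10) - ((-s) - (-s)^3/3 + (-s)^5/10))) {-s..s}"
    by (rule has_integral_symmetric_interval_FTC[OF assms])
      (auto intro!: derivative_eq_intros simp: power2_eq_square power3_eq_cube field_simps)
  then have poly: "((\<lambda>u::real. 1 - u\<^sup>2 + u^4/2) has_integral 2 * (s - s^3/3 + s^5/10)) {-s..s}"
    by (rule has_integral_eq_rhs) (simp add: power_minus_odd)
  have "exp (- u\<^sup>2) \<le> 1 - u\<^sup>2 + u^4/2" for u :: real
    using exp_minus_le_quadratic[of "u\<^sup>2"] by (simp flip: power_mult)
  then have "integral {-s..s} (\<lambda>u. exp (- u\<^sup>2)) \<le> integral {-s..s} (\<lambda>u::real. 1 - u\<^sup>2 + u^4/2)"
    using poly by (intro integral_le integrable_on_exp_minus_sq) auto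
  also have "\<dots> = 2 * (s - s^3/3 + s^5/10)"
    using poly by (rule integral_unique)
  finally have I: "integral {-s..s} (\<lambda>u. exp (- u\<^sup>2)) \<le> 2 * (s - s^3/3 + s^5/10)" .
  have "0 \<le> integral {-s..s} (\<lambda>u. exp (- u\<^sup>2))"
    by (intro integral_nonneg integrable_on_exp_minus_sq) auto
  then have "erf s \<le> 5642/10000 * integral {-s..s} (\<lambda>u. exp (- u\<^sup>2))"
    unfolding erf_def by (intro mult_right_mono one_div_sqrt_pi_le)
  also have "\<dots> \<le> 5642/10000 * (2 * (s - s^3/3 + s^5/10))"
    using I by simp
  finally show ?thesis by simp
qed

lemma std_normal_density_ge_quadratic: "3989/10000 * (1 - s\<^sup>2/2) \<le> std_normal_density s"
proof (cases "s\<^sup>2 \<le> 2")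
  case True
  have "3989/10000 * (1 - s\<^sup>2/2) \<le> 1 / sqrt (2 * pi) * (1 - s\<^sup>2/2)"
    using one_div_sqrt_2pi_ge True by (intro mult_right_mono) auto
  also have "\<dots> \<le> 1 / sqrt (2 * pi) * exp (- s\<^sup>2/2)"
    using exp_ge_add_one_self[of "- s\<^sup>2/2"] by (intro mult_left_mono) auto
  finally show ?thesis by (simp add: std_normal_density_def)
next
  case False
  then have "3989/10000 * (1 - s\<^sup>2/2) \<le> 0" by simp
  then show ?thesis using normal_density_nonneg[of 0 1 s] by linarith
qed

lemma integral_std_normal_density_ge:
  fixes s :: real
  assumes "0 \<le> s"
  shows "2 * (3989/10000) * (s - s^3/6) \<le> integral {-s..s} std_normal_density"
proof -
  have "((\<lambda>z. 1 - z\<^sup>2/2) has_integral ((s - s^3/6) - ((-s) - (-s)^3/6))) {-s..s}"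
    by (rule has_integral_symmetric_interval_FTC[OF assms])
      (auto intro!: derivative_eq_intros simp: power2_eq_square power3_eq_cube field_simps)
  then have "((\<lambda>z. 1 - z\<^sup>2/2) has_integral 2 * (s - s^3/6)) {-s..s}"
    by (rule has_integral_eq_rhs) (simp add: power_minus_odd)
  then have poly: "((\<lambda>z. 3989/10000 * (1 - z\<^sup>2/2)) has_integral 3989/10000 * (2 * (s - s^3/6))) {-s..s}"
    by (rule has_integral_mult_right)
  have "std_normal_density integrable_on {-s..s}"
    unfolding std_normal_density_def[abs_def] by (intro integrable_continuous_real continuous_intros) auto
  then have "integral {-s..s} (\<lambda>z. 3989/10000 * (1 - z\<^sup>2/2)) \<le> integral {-s..s} std_normal_density"
    using poly std_normal_density_ge_quadratic by (intro integral_le) auto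
  then show ?thesis
    using integral_unique[OF poly] by simp
qed

text \<open>\<open>s * bound_gap_poly s\<close> is the expanded left-hand side of \<open>bound_gap_nonneg\<close>.\<close>
definition bound_gap_poly :: "real \<Rightarrow> real" where
  "bound_gap_poly s = 876/625 - 683/5000 * s^2 - 53599/75000 * s^4 + 11252969/75000000 * s^5
      + 2821/25000 * s^6 - 11252969/225000000 * s^7 + 11252969/750000000 * s^9"

lemma bound_gap_poly_nonneg_on_interval:
  fixes u s v :: real
  assumes "0 \<le> u" "u \<le> s" "s \<le> v"
    and "0 < 876/625 - 683/5000 * v^2 - 53599/75000 * v^4 + 11252969/75000000 * u^5
        + 2821/25000 * u^6 - 11252969/225000000 * v^7 + 11252969/750000000 * u^9"
  shows "0 \<le> bound_gap_poly s"
proof -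
  have "s^2 \<le> v^2" "s^4 \<le> v^4" "s^7 \<le> v^7" "u^5 \<le> s^5" "u^6 \<le> s^6" "u^9 \<le> s^9"
    using assms by (auto intro!: power_mono)
  then show ?thesis
    using assms(4) unfolding bound_gap_poly_def by linarith
qed

lemma bound_gap_poly_nonneg:
  fixes s :: real
  assumes "0 \<le> s" "s\<^sup>2 \<le> 3/2"
  shows "0 \<le> bound_gap_poly s"
proof -
  have "s \<le> 12248/10000"
  proof (rule ccontr)
    assume "\<not> ?thesis"
    then have "(12248/10000)\<^sup>2 < s\<^sup>2" by (intro power_strict_mono) auto
    with assms(2) show False by (simp add: power2_eq_square)
  qed
  then consider "s \<le> 61/100" | "61/100 \<le> s" "s \<le> 91/100" | "91/100 \<le> s" "s \<le> 106/100"
    | "106/100 \<le> s" "s \<le> 114/100" | "114/100 \<le> s" "s \<le> 118/100" | "118/100 \<le> s" "s \<le> 12248/10000"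
    by linarith
  then show ?thesis
  proof cases
    case 1 then show ?thesis using assms by (intro bound_gap_poly_nonneg_on_interval[of 0 s "61/100"]) (simp_all add: power_divide)
  next
    case 2 then show ?thesis by (intro bound_gap_poly_nonneg_on_interval[of "61/100" s "91/100"]) (simp_all add: power_divide)
  next
    case 3 then show ?thesis by (intro bound_gap_poly_nonneg_on_interval[of "91/100" s "106/100"]) (simp_all add: power_divide)
  next
    case 4 then show ?thesis by (intro bound_gap_poly_nonneg_on_interval[of "106/100" s "114/100"]) (simp_all add: power_divide)
  next
    case 5 then show ?thesis by (intro bound_gap_poly_nonneg_on_interval[of "114/100" s "118/100"]) (simp_all add: power_divide)
  next
    case 6 then show ?thesis by (intro bound_gap_poly_nonneg_on_interval[of "118/100" s "12248/10000"]) (simp_all add: power_divide)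
  qed
qed

lemma bound_gap_nonneg:
  fixes s :: real
  assumes "0 \<le> s" "s\<^sup>2 \<le> 3/2"
  shows "0 \<le> 2 * s * (3989/10000 * (1 - s\<^sup>2/2)) * (6 - 3 * (11284/10000 * (s - s^3/3 + s^5/10)))
     - (1 - 2 * (3989/10000) * (s - s^3/6)) * (11284/10000 * (s - s^3/3 + s^5/10)) * (3 - s\<^sup>2)"
proof -
  have "2 * s * (3989/10000 * (1 - s\<^sup>2/2)) * (6 - 3 * (11284/10000 * (s - s^3/3 + s^5/10)))
     - (1 - 2 * (3989/10000) * (s - s^3/6)) * (11284/10000 * (s - s^3/3 + s^5/10)) * (3 - s\<^sup>2)
     = s * bound_gap_poly s"
    by (simp add: bound_gap_poly_def eval_nat_numeral field_simps)
  then show ?thesis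
    using bound_gap_poly_nonneg[OF assms] assms(1) by simp
qed

lemma tail_ratio_ge_small_threshold:
  fixes s P :: real
  assumes s: "0 \<le> s" "s\<^sup>2 \<le> 3/2" and P: "0 < P" "P \<le> 1 - 2 * (3989/10000) * (s - s^3/6)"
  shows "(6 - s\<^sup>2 * erf s) / (6 - 3 * erf s) \<le> (P + 2 * s * std_normal_density s) / P"
proof -
  define e where "e = erf s"
  define eU where "eU = 11284/10000 * (s - s^3/3 + s^5/10)"
  define phL where "phL = 3989/10000 * (1 - s\<^sup>2/2)"
  define PU where "PU = 1 - 2 * (3989/10000) * (s - s^3/6)"
  have e: "0 \<le> e" "e \<le> 1" "e \<le> eU"
    unfolding e_def eU_def using erf_le_poly[OF s(1)] by (auto intro: erf_nonneg erf_le_1)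
  have phL: "0 \<le> phL" "phL \<le> std_normal_density s"
    unfolding phL_def using s std_normal_density_ge_quadratic[of s] by auto
  have "2 * s * phL * (6 - 3 * eU) \<le> 2 * s * std_normal_density s * (6 - 3 * e)"
  proof -
    have "2 * s * phL * (6 - 3 * eU) \<le> 2 * s * phL * (6 - 3 * e)"
      using e s phL by (intro mult_left_mono) auto
    also have "\<dots> \<le> 2 * s * std_normal_density s * (6 - 3 * e)"
      using phL s e by (intro mult_right_mono mult_left_mono) auto
    finally show ?thesis .
  qed
  moreover have "P \<le> PU"
    using P unfolding PU_def by simp
  then have "P * e \<le> PU * eU"
    using P e by (intro mult_mono) auto
  then have "P * e * (3 - s\<^sup>2) \<le> PU * eU * (3 - s\<^sup>2)"
    using s by (intro mult_right_mono) auto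
  moreover have "0 \<le> 2 * s * phL * (6 - 3 * eU) - PU * eU * (3 - s\<^sup>2)"
    unfolding phL_def eU_def PU_def using bound_gap_nonneg[OF s] .
  ultimately have "(6 - s\<^sup>2 * e) * P \<le> (P + 2 * s * std_normal_density s) * (6 - 3 * e)"
    by (simp add: algebra_simps)
  then show ?thesis
    using P e unfolding e_def by (simp add: pos_divide_le_eq pos_le_divide_eq mult.commute)
qed

lemma ratio_le_large_threshold:
  fixes \<tau> e :: real
  assumes "3/2 \<le> \<tau>" "e \<le> 1"
  shows "(6 - \<tau> * e) / (6 - 3 * e) \<le> \<tau>"
proof -
  have "\<tau> * e \<le> \<tau>" using assms by (simp add: mult_left_le)
  moreover have "\<tau> * (6 - 3 * e) = 6 * \<tau> - 3 * (\<tau> * e)" by (simp add: algebra_simps)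
  ultimately have "6 - \<tau> * e \<le> \<tau> * (6 - 3 * e)" using assms by linarith
  then show ?thesis using assms by (simp add: pos_divide_le_eq mult.commute)
qed

theorem lemma1:
  fixes d :: "'a::euclidean_space" and \<tau> :: real
  assumes "norm d = 1" and "\<tau> \<ge> 0"
  shows "cond_exp_event std_gaussian (\<lambda>a. (a \<bullet> d)\<^sup>2) {a. (a \<bullet> d)\<^sup>2 \<ge> \<tau>}
           \<ge> (6 - \<tau> * erf (sqrt \<tau>)) / (6 - 3 * erf (sqrt \<tau>))"
proof -
  define s where "s = sqrt \<tau>"
  have s: "0 \<le> s" "\<tau> = s\<^sup>2" using assms(2) by (auto simp: s_def)
  let ?P = "std_normal_tail_prob s" and ?M = "std_normal_tail_moment2 s"
  have cond: "cond_exp_event std_gaussian (\<lambda>a. (a \<bullet> d)\<^sup>2) {a. (a \<bullet> d)\<^sup>2 \<ge> \<tau>} = ?M / ?P"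
    using cond_exp_event_std_gaussian_inner_sq[OF assms(1), of s] by (simp add: s(2))
  have P: "0 < ?P" by (rule std_normal_tail_prob_pos)
  show ?thesis
  proof (cases "3/2 \<le> \<tau>")
    case True
    have "(6 - \<tau> * erf s) / (6 - 3 * erf s) \<le> \<tau>"
      using True erf_le_1 by (rule ratio_le_large_threshold)
    also have "\<tau> \<le> ?M / ?P"
      using std_normal_tail_moment2_ge[of s] P s(2) by (simp add: pos_le_divide_eq mult.commute)
    finally show ?thesis by (simp add: cond s_def)
  next
    case False
    have "?P \<le> 1 - 2 * (3989/10000) * (s - s^3/6)"
      using std_normal_tail_prob_eq[OF s(1)] integral_std_normal_density_ge[OF s(1)] by simp
    then have "(6 - \<tau> * erf s) / (6 - 3 * erf s) \<le> (?P + 2 * s * std_normal_density s) / ?P"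
      using tail_ratio_ge_small_threshold[OF s(1) _ P] False s(2) by simp
    also have "\<dots> = ?M / ?P"
      by (simp add: std_normal_tail_moment2_eq[OF s(1)])
    finally show ?thesis by (simp add: cond s_def)
  qed
qed

end
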